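(* Let $K$ be a field, $n\ge 1$, and $A_n(\tau_n)$ a quiver of type $A_n$ with arbitrary orientation. Let $$\Theta\colon \bigoplus_{1\le a\le b\le n}\mathbb{I}[a,b]^{m^1_{a,b}}\to \bigoplus_{1\le a\le b\le n}\mathbb{I}[a,b]^{m^2_{a,b}},\qquad \Psi\colon \bigoplus_{1\le a\le b\le n}\mathbb{I}[a,b]^{m^2_{a,b}}\to \bigoplus_{1\le a\le b\le n}\mathbb{I}[a,b]^{m^3_{a,b}}$$ be morphisms of representations of $A_n(\tau_n)$. Then for all $1\le a\le b\le n$, $$[\Psi\Theta]^{a:b}_{a:b}=\Psi^{a:b}_{a:b}\,\Theta^{a:b}_{a:b}.$$
   Context: The interval representation $\mathbb{I}[a,b]$ of $A_n(\tau_n)$ has $K$ at vertices $a,\dots,b$, $0$ elsewhere, identity maps on arrows between two vertices in $[a,b]$, and zero maps otherwise; $\mathbb{I}[a,b]^m$ is the direct sum of $m$ copies. For a morphism $\Phi\colon\bigoplus\mathbb{I}[a,b]^{m_{a,b}}\to\bigoplus\mathbb{I}[a,b]^{m'_{a,b}}$, its block $\Phi^{c:d}_{a:b}\colon\mathbb{I}[a,b]^{m_{a,b}}\to\mathbb{I}[c,d]^{m'_{c,d}}$ is $\pi_{c,d}\circ\Phi\circ\iota_{a,b}$, where $\iota_{a,b}$ is the canonical inclusion of the summand $\mathbb{I}[a,b]^{m_{a,b}}$ into the source and $\pi_{c,d}$ is the canonical projection of the target onto its summand $\mathbb{I}[c,d]^{m'_{c,d}}$. *)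

theory Defs
  imports Main
begin

text \<open>Vertices are 1..n; for 1 <= i < n there is one arrow between i and i+1, pointing
i -> i+1 if tau i and i+1 -> i otherwise.

The direct sum  (+)_{1<=a<=b<=n} I[a,b]^{m a b}  is realised with its canonical basis:
basis vectors of the copy number k (k < m a b) of I[a,b] are indexed by (a,b,k).
At vertex i the vector space is the space of coordinate functions supported on the
basis indices (a,b,k) with a <= i <= b; the structure map along an arrow s -> t is the
identity on coordinates of intervals containing both s and t and zero otherwise.\<close>

type_synonym idx = "nat \<times> nat \<times> nat"

definition coords :: "nat \<Rightarrow> (nat \<Rightarrow> nat \<Rightarrow> nat) \<Rightarrow> nat \<Rightarrow> idx set" where
  "coords n m i = {(a, b, k). 1 \<le> a \<and> a \<le> i \<and> i \<le> b \<and> b \<le> n \<and> k < m a b}"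

definition space :: "nat \<Rightarrow> (nat \<Rightarrow> nat \<Rightarrow> nat) \<Rightarrow> nat \<Rightarrow> (idx \<Rightarrow> 'k::field) set" where
  "space n m i = {v. \<forall>j. j \<notin> coords n m i \<longrightarrow> v j = 0}"

definition smap :: "nat \<Rightarrow> (nat \<Rightarrow> nat \<Rightarrow> nat) \<Rightarrow> nat \<Rightarrow> (idx \<Rightarrow> 'k::field) \<Rightarrow> (idx \<Rightarrow> 'k)" where
  "smap n m t v = (\<lambda>j. if j \<in> coords n m t then v j else 0)"

definition arr_src :: "(nat \<Rightarrow> bool) \<Rightarrow> nat \<Rightarrow> nat" where
  "arr_src \<tau> i = (if \<tau> i then i else i + 1)"

definition arr_tgt :: "(nat \<Rightarrow> bool) \<Rightarrow> nat \<Rightarrow> nat" where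
  "arr_tgt \<tau> i = (if \<tau> i then i + 1 else i)"

definition klinear :: "(idx \<Rightarrow> 'k::field) set \<Rightarrow> (idx \<Rightarrow> 'k) set \<Rightarrow> ((idx \<Rightarrow> 'k) \<Rightarrow> (idx \<Rightarrow> 'k)) \<Rightarrow> bool" where
  "klinear V W f \<longleftrightarrow> (\<forall>v\<in>V. f v \<in> W)
     \<and> (\<forall>u\<in>V. \<forall>v\<in>V. f (\<lambda>j. u j + v j) = (\<lambda>j. f u j + f v j))
     \<and> (\<forall>c. \<forall>v\<in>V. f (\<lambda>j. c * v j) = (\<lambda>j. c * f v j))"

definition is_morphism :: "nat \<Rightarrow> (nat \<Rightarrow> bool) \<Rightarrow> (nat \<Rightarrow> nat \<Rightarrow> nat) \<Rightarrow> (nat \<Rightarrow> nat \<Rightarrow> nat)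
    \<Rightarrow> (nat \<Rightarrow> (idx \<Rightarrow> 'k::field) \<Rightarrow> (idx \<Rightarrow> 'k)) \<Rightarrow> bool" where
  "is_morphism n \<tau> m m' \<Phi> \<longleftrightarrow>
     (\<forall>i\<in>{1..n}. klinear (space n m i) (space n m' i) (\<Phi> i))
   \<and> (\<forall>i\<in>{1..<n}. \<forall>v\<in>space n m (arr_src \<tau> i).
        \<Phi> (arr_tgt \<tau> i) (smap n m (arr_tgt \<tau> i) v) = smap n m' (arr_tgt \<tau> i) (\<Phi> (arr_src \<tau> i) v))"

definition single :: "(nat \<Rightarrow> nat \<Rightarrow> nat) \<Rightarrow> nat \<Rightarrow> nat \<Rightarrow> (nat \<Rightarrow> nat \<Rightarrow> nat)" where
  "single m a b = (\<lambda>c d. if c = a \<and> d = b then m a b else 0)"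

text \<open>Canonical projection onto the coordinates of the summand I[c,d]^{m c d}; on vectors of the
summand I[a,b]^{m a b} the map proj a b is the identity, i.e. the canonical inclusion.\<close>
definition proj :: "nat \<Rightarrow> nat \<Rightarrow> (idx \<Rightarrow> 'k::zero) \<Rightarrow> (idx \<Rightarrow> 'k)" where
  "proj c d v = (\<lambda>(x, y, k). if x = c \<and> y = d then v (x, y, k) else 0)"

text \<open>Block Phi^{c:d}_{a:b} = pi_{c,d} o Phi o iota_{a,b}, vertexwise; it is a morphism from
the representation with multiplicities single m a b to the one with single m' c d.\<close>
definition block :: "(nat \<Rightarrow> (idx \<Rightarrow> 'k::field) \<Rightarrow> (idx \<Rightarrow> 'k)) \<Rightarrow> nat \<Rightarrow> nat \<Rightarrow> nat \<Rightarrow> nat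
    \<Rightarrow> (nat \<Rightarrow> (idx \<Rightarrow> 'k) \<Rightarrow> (idx \<Rightarrow> 'k))" where
  "block \<Phi> a b c d = (\<lambda>i v. proj c d (\<Phi> i (proj a b v)))"

definition comp_mor :: "(nat \<Rightarrow> (idx \<Rightarrow> 'k) \<Rightarrow> (idx \<Rightarrow> 'k)) \<Rightarrow> (nat \<Rightarrow> (idx \<Rightarrow> 'k) \<Rightarrow> (idx \<Rightarrow> 'k))
    \<Rightarrow> (nat \<Rightarrow> (idx \<Rightarrow> 'k) \<Rightarrow> (idx \<Rightarrow> 'k))" where
  "comp_mor \<Psi> \<Theta> = (\<lambda>i. \<Psi> i \<circ> \<Theta> i)"

end

theory Submission
  imports Defs
begin

text \<open>Vertexwise, the block \<open>[\<Psi>\<Theta>]\<^sup>a\<^sup>:\<^sup>b\<^sub>a\<^sub>:\<^sub>b\<close> is the sum over all \<open>[c,d]\<close> of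
  \<open>\<Psi>\<^sup>a\<^sup>:\<^sup>b\<^sub>c\<^sub>:\<^sub>d \<Theta>\<^sup>c\<^sup>:\<^sup>d\<^sub>a\<^sub>:\<^sub>b\<close>, so it suffices that every cross term with \<open>[c,d] \<noteq> [a,b]\<close> vanishes.
  By naturality along the arrows inside the overlap of two intervals, a block between their summands
  vanishes at one vertex of the overlap iff it vanishes at all of them; at an endpoint where the
  intervals differ, the orientation of the adjacent arrow forces one of the two blocks
  \<open>\<Theta>\<^sup>c\<^sup>:\<^sup>d\<^sub>a\<^sub>:\<^sub>b\<close>, \<open>\<Psi>\<^sup>a\<^sup>:\<^sup>b\<^sub>c\<^sub>:\<^sub>d\<close> to be zero there.\<close>

lemma coords_single:
  "coords n (single m p q) j =
     (if p \<le> j \<and> j \<le> q then {(p, q, k) | k. 1 \<le> p \<and> q \<le> n \<and> k < m p q} else {})"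
  by (auto simp: coords_def single_def split: if_splits)

lemma space_single_subset: "space n (single m p q) j \<subseteq> space n m j"
  by (auto simp: space_def coords_def single_def split: if_splits)

lemma space_single_move:
  "v \<in> space n (single m p q) j \<Longrightarrow> p \<le> j' \<Longrightarrow> j' \<le> q \<Longrightarrow> v \<in> space n (single m p q) j'"
  by (auto simp: space_def coords_single split: if_splits)

lemma space_single_outside:
  "v \<in> space n (single m p q) j \<Longrightarrow> \<not> (p \<le> j \<and> j \<le> q) \<Longrightarrow> v = (\<lambda>_. 0)"
  by (auto simp: space_def coords_single)

lemma zero_in_space: "(\<lambda>_. 0) \<in> space n m j"
  by (simp add: space_def)

lemma space_sum:
  "finite P \<Longrightarrow> (\<And>p. p \<in> P \<Longrightarrow> f p \<in> space n m j) \<Longrightarrow> (\<lambda>z. \<Sum>p\<in>P. f p z) \<in> space n m j"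
  by (induction P rule: finite_induct) (auto simp: space_def)

lemma smap_single:
  "v \<in> space n (single m p q) j \<Longrightarrow> smap n m t v = (if p \<le> t \<and> t \<le> q then v else (\<lambda>_. 0))"
  by (rule ext) (auto simp: smap_def space_def coords_def single_def split: if_splits)

lemma proj_zero: "proj r s (\<lambda>_. 0) = (\<lambda>_. 0)"
  by (auto simp: proj_def)

lemma proj_proj: "proj r s (proj r s x) = proj r s x"
  by (auto simp: proj_def)

lemma proj_sum: "proj r s (\<lambda>z. \<Sum>p\<in>P. g p z) = (\<lambda>z. \<Sum>p\<in>P. proj r s (g p) z)"
  by (rule ext) (auto simp: proj_def)

lemma proj_single: "v \<in> space n (single m p q) j \<Longrightarrow> proj p q v = v"
  by (rule ext) (auto simp: proj_def space_def coords_single split: if_splits)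

lemma proj_in_space_single: "x \<in> space n m j \<Longrightarrow> proj r s x \<in> space n (single m r s) j"
  by (auto simp: proj_def space_def coords_def single_def)

lemma proj_outside: "x \<in> space n m j \<Longrightarrow> \<not> (r \<le> j \<and> j \<le> s) \<Longrightarrow> proj r s x = (\<lambda>_. 0)"
  by (rule ext) (auto simp: proj_def space_def coords_def)

lemma proj_smap:
  "x \<in> space n m j \<Longrightarrow> proj r s (smap n m t x) = (if r \<le> t \<and> t \<le> s then proj r s x else (\<lambda>_. 0))"
  by (rule ext) (auto simp: proj_def smap_def space_def coords_def)

lemma space_eq_sum_proj:
  assumes "x \<in> space n m j"
  shows "x = (\<lambda>z. \<Sum>rs\<in>{1..n} \<times> {1..n}. proj (fst rs) (snd rs) x z)"
proof (rule ext)
  fix z :: idx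
  obtain r s k where z: "z = (r, s, k)" by (cases z)
  have "proj (fst rs) (snd rs) x z = (if rs = (r, s) then x z else 0)" for rs
    by (cases rs) (auto simp: z proj_def)
  moreover have "x z \<noteq> 0 \<Longrightarrow> (r, s) \<in> {1..n} \<times> {1..n}"
  proof -
    assume "x z \<noteq> 0"
    then have "z \<in> coords n m j" using assms unfolding space_def by blast
    then show ?thesis by (simp add: z coords_def)
  qed
  ultimately show "x z = (\<Sum>rs\<in>{1..n} \<times> {1..n}. proj (fst rs) (snd rs) x z)"
    by (cases "x z = 0") auto
qed

lemma morphism_klinear:
  "is_morphism n \<tau> m m' \<Phi> \<Longrightarrow> 1 \<le> j \<Longrightarrow> j \<le> n \<Longrightarrow> klinear (space n m j) (space n m' j) (\<Phi> j)"
  by (simp add: is_morphism_def)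

lemma morphism_maps_space:
  "is_morphism n \<tau> m m' \<Phi> \<Longrightarrow> 1 \<le> j \<Longrightarrow> j \<le> n \<Longrightarrow> v \<in> space n m j \<Longrightarrow> \<Phi> j v \<in> space n m' j"
  using morphism_klinear unfolding klinear_def by blast

lemma morphism_zero:
  assumes "is_morphism n \<tau> m m' \<Phi>" "1 \<le> j" "j \<le> n"
  shows "\<Phi> j (\<lambda>_. 0) = (\<lambda>_. 0)"
proof -
  have "\<forall>c. \<forall>v\<in>space n m j. \<Phi> j (\<lambda>i. c * v i) = (\<lambda>i. c * \<Phi> j v i)"
    using morphism_klinear[OF assms] unfolding klinear_def by blast
  then have "\<Phi> j (\<lambda>i. 0 * 0) = (\<lambda>i. 0 * \<Phi> j (\<lambda>_. 0) i)"
    using zero_in_space[of n m j] by fastforce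
  then show ?thesis by simp
qed

lemma morphism_sum:
  assumes M: "is_morphism n \<tau> m m' \<Phi>" and j: "1 \<le> j" "j \<le> n"
  shows "finite P \<Longrightarrow> (\<And>p. p \<in> P \<Longrightarrow> f p \<in> space n m j) \<Longrightarrow>
     \<Phi> j (\<lambda>z. \<Sum>p\<in>P. f p z) = (\<lambda>z. \<Sum>p\<in>P. \<Phi> j (f p) z)"
proof (induction P rule: finite_induct)
  case empty
  then show ?case using morphism_zero[OF M j] by simp
next
  case (insert p P)
  have "\<Phi> j (\<lambda>z. f p z + (\<Sum>p\<in>P. f p z)) = (\<lambda>z. \<Phi> j (f p) z + \<Phi> j (\<lambda>z. \<Sum>p\<in>P. f p z) z)"
    using morphism_klinear[OF M j] space_sum[of P f n m j] insert.prems insert.hyps(1)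
    unfolding klinear_def by simp
  then show ?case using insert by simp
qed

lemma morphism_naturality_proj:
  assumes M: "is_morphism n \<tau> m m' \<Phi>" and i: "1 \<le> i" "i < n"
    and v: "v \<in> space n (single m p q) (arr_src \<tau> i)"
  defines "t \<equiv> arr_tgt \<tau> i"
  shows "(if p \<le> t \<and> t \<le> q then proj r s (\<Phi> t v) else (\<lambda>_. 0))
       = (if r \<le> t \<and> t \<le> s then proj r s (\<Phi> (arr_src \<tau> i) v) else (\<lambda>_. 0))"
proof -
  have bounds: "1 \<le> t" "t \<le> n" "1 \<le> arr_src \<tau> i" "arr_src \<tau> i \<le> n"
    using i by (auto simp: t_def arr_src_def arr_tgt_def)
  have "v \<in> space n m (arr_src \<tau> i)" using v space_single_subset by blast
  then have "proj r s (\<Phi> t (smap n m t v)) = proj r s (smap n m' t (\<Phi> (arr_src \<tau> i) v))"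
    using M i unfolding is_morphism_def t_def by simp
  moreover have "\<Phi> (arr_src \<tau> i) v \<in> space n m' (arr_src \<tau> i)"
    using morphism_maps_space[OF M bounds(3,4)] v space_single_subset by blast
  ultimately show ?thesis
    unfolding smap_single[OF v] proj_smap[OF \<open>\<Phi> (arr_src \<tau> i) v \<in> _\<close>]
    by (cases "p \<le> t \<and> t \<le> q") (auto simp: morphism_zero[OF M bounds(1,2)] proj_zero)
qed

lemma morphism_proj_step:
  assumes M: "is_morphism n \<tau> m m' \<Phi>" and j: "1 \<le> j" "j < n"
    and "p \<le> j" "Suc j \<le> q" "r \<le> j" "Suc j \<le> s"
    and v: "v \<in> space n (single m p q) j"
  shows "proj r s (\<Phi> j v) = proj r s (\<Phi> (Suc j) v)"
proof (cases "\<tau> j")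
  case True
  then show ?thesis
    using morphism_naturality_proj[OF M j, of v p q r s] v assms(4-7)
    by (simp add: arr_src_def arr_tgt_def)
next
  case False
  have "v \<in> space n (single m p q) (Suc j)"
    using space_single_move[OF v] assms(4-5) by simp
  then show ?thesis
    using False morphism_naturality_proj[OF M j, of v p q r s] assms(4-7)
    by (simp add: arr_src_def arr_tgt_def)
qed

definition block_vanishes ::
    "(nat \<Rightarrow> (idx \<Rightarrow> 'k::field) \<Rightarrow> (idx \<Rightarrow> 'k)) \<Rightarrow> nat \<Rightarrow> (nat \<Rightarrow> nat \<Rightarrow> nat)
      \<Rightarrow> nat \<Rightarrow> nat \<Rightarrow> nat \<Rightarrow> nat \<Rightarrow> nat \<Rightarrow> bool" where
  "block_vanishes \<Phi> n m p q r s j \<longleftrightarrow> (\<forall>v\<in>space n (single m p q) j. proj r s (\<Phi> j v) = (\<lambda>_. 0))"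

lemma block_vanishes_Suc_iff:
  assumes M: "is_morphism n \<tau> m m' \<Phi>" and j: "1 \<le> j" "j < n"
    and "p \<le> j" "Suc j \<le> q" "r \<le> j" "Suc j \<le> s"
  shows "block_vanishes \<Phi> n m p q r s (Suc j) \<longleftrightarrow> block_vanishes \<Phi> n m p q r s j"
  using morphism_proj_step[OF assms] space_single_move[of _ n m p q] assms(4,5)
  unfolding block_vanishes_def by (metis Suc_leD le_SucI)

lemma block_vanishes_overlap:
  assumes M: "is_morphism n \<tau> m m' \<Phi>"
    and "1 \<le> x" "x \<le> y" "y \<le> n" "p \<le> x" "r \<le> x" "y \<le> q" "y \<le> s"
  shows "block_vanishes \<Phi> n m p q r s y \<longleftrightarrow> block_vanishes \<Phi> n m p q r s x"
  using assms(3,4,7,8)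
proof (induction y rule: dec_induct)
  case (step y)
  then show ?case using block_vanishes_Suc_iff[OF M, of y p q r s] assms(2,5,6) by simp
qed simp

lemma block_vanishes_at_target_start:
  fixes \<Phi> :: "nat \<Rightarrow> (idx \<Rightarrow> 'k::field) \<Rightarrow> (idx \<Rightarrow> 'k)"
  assumes M: "is_morphism n \<tau> m m' \<Phi>"
    and "1 \<le> p" "p < r" "r \<le> q" "r \<le> s" "q \<le> n" "\<tau> (r - 1)"
  shows "block_vanishes \<Phi> n m p q r s r"
  unfolding block_vanishes_def
proof
  fix v :: "idx \<Rightarrow> 'k" assume v: "v \<in> space n (single m p q) r"
  obtain j where r: "r = Suc j" using assms(3) by (cases r) auto
  have j: "1 \<le> j" "j < n" using assms r by auto
  have vj: "v \<in> space n (single m p q) j"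
    using space_single_move[OF v] assms r by simp
  have "proj r s (\<Phi> r v) = proj r s (\<Phi> j v)"
    using morphism_naturality_proj[OF M j, of v p q r s] vj assms r
    by (simp add: arr_src_def arr_tgt_def)
  also have "\<dots> = (\<lambda>_. 0)"
  proof (rule proj_outside)
    show "\<Phi> j v \<in> space n m' j"
      using morphism_maps_space[OF M] j subsetD[OF space_single_subset vj] by simp
  qed (simp add: r)
  finally show "proj r s (\<Phi> r v) = (\<lambda>_. 0)" .
qed

lemma block_vanishes_at_source_start:
  fixes \<Phi> :: "nat \<Rightarrow> (idx \<Rightarrow> 'k::field) \<Rightarrow> (idx \<Rightarrow> 'k)"
  assumes M: "is_morphism n \<tau> m m' \<Phi>"
    and "1 \<le> r" "r < p" "p \<le> s" "p \<le> q" "q \<le> n" "\<not> \<tau> (p - 1)"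
  shows "block_vanishes \<Phi> n m p q r s p"
  unfolding block_vanishes_def
proof
  fix v :: "idx \<Rightarrow> 'k" assume v: "v \<in> space n (single m p q) p"
  obtain j where p: "p = Suc j" using assms(3) by (cases p) auto
  have j: "1 \<le> j" "j < n" using assms p by auto
  show "proj r s (\<Phi> p v) = (\<lambda>_. 0)"
    using morphism_naturality_proj[OF M j, of v p q r s] v assms p
    by (simp add: arr_src_def arr_tgt_def)
qed

lemma block_vanishes_at_source_end:
  fixes \<Phi> :: "nat \<Rightarrow> (idx \<Rightarrow> 'k::field) \<Rightarrow> (idx \<Rightarrow> 'k)"
  assumes M: "is_morphism n \<tau> m m' \<Phi>"
    and "1 \<le> p" "p \<le> q" "r \<le> q" "q < s" "s \<le> n" "\<tau> q"
  shows "block_vanishes \<Phi> n m p q r s q"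
  unfolding block_vanishes_def
proof
  fix v :: "idx \<Rightarrow> 'k" assume v: "v \<in> space n (single m p q) q"
  have q: "1 \<le> q" "q < n" using assms by auto
  show "proj r s (\<Phi> q v) = (\<lambda>_. 0)"
    using morphism_naturality_proj[OF M q, of v p q r s] v assms
    by (simp add: arr_src_def arr_tgt_def)
qed

lemma block_vanishes_at_target_end:
  fixes \<Phi> :: "nat \<Rightarrow> (idx \<Rightarrow> 'k::field) \<Rightarrow> (idx \<Rightarrow> 'k)"
  assumes M: "is_morphism n \<tau> m m' \<Phi>"
    and "1 \<le> r" "p \<le> s" "r \<le> s" "s < q" "q \<le> n" "\<not> \<tau> s"
  shows "block_vanishes \<Phi> n m p q r s s"
  unfolding block_vanishes_def
proof
  fix v :: "idx \<Rightarrow> 'k" assume v: "v \<in> space n (single m p q) s"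
  have s: "1 \<le> s" "s < n" using assms by auto
  have vs: "v \<in> space n (single m p q) (Suc s)"
    using space_single_move[OF v] assms by simp
  have "proj r s (\<Phi> s v) = proj r s (\<Phi> (Suc s) v)"
    using morphism_naturality_proj[OF M s, of v p q r s] vs assms
    by (simp add: arr_src_def arr_tgt_def)
  also have "\<dots> = (\<lambda>_. 0)"
  proof (rule proj_outside)
    show "\<Phi> (Suc s) v \<in> space n m' (Suc s)"
      using morphism_maps_space[OF M] s subsetD[OF space_single_subset vs] by simp
  qed simp
  finally show "proj r s (\<Phi> s v) = (\<lambda>_. 0)" .
qed

lemma block_vanishes_transfer:
  assumes M: "is_morphism n \<tau> m m' \<Phi>"
    and "1 \<le> x" "max p r \<le> x" "x \<le> min q s" "1 \<le> y" "max p r \<le> y" "y \<le> min q s" "q \<le> n"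
  shows "block_vanishes \<Phi> n m p q r s x \<longleftrightarrow> block_vanishes \<Phi> n m p q r s y"
  using block_vanishes_overlap[OF M, of x y p r q s] block_vanishes_overlap[OF M, of y x p r q s] assms
  by (cases "x \<le> y") auto

lemma block_vanishes_dichotomy:
  assumes \<Theta>: "is_morphism n \<tau> m1 m2 \<Theta>" and \<Psi>: "is_morphism n \<tau> m3 m4 \<Psi>"
    and "1 \<le> a" "a \<le> i" "i \<le> b" "b \<le> n" "1 \<le> c" "c \<le> i" "i \<le> d" "d \<le> n"
    and "(c, d) \<noteq> (a, b)"
  shows "block_vanishes \<Theta> n m1 a b c d i \<or> block_vanishes \<Psi> n m3 c d a b i"
proof -
  have \<Theta>_at: "block_vanishes \<Theta> n m1 a b c d i"
    if "block_vanishes \<Theta> n m1 a b c d x" "max a c \<le> x" "x \<le> min b d" for x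
    using that block_vanishes_transfer[OF \<Theta>, of x a c b d i] assms by auto
  have \<Psi>_at: "block_vanishes \<Psi> n m3 c d a b i"
    if "block_vanishes \<Psi> n m3 c d a b x" "max a c \<le> x" "x \<le> min b d" for x
    using that block_vanishes_transfer[OF \<Psi>, of x c a d b i] assms by auto
  consider "a < c" | "c < a" | "a = c" "d < b" | "a = c" "b < d"
    using assms(11) by fastforce
  then show ?thesis
  proof cases
    case 1
    then show ?thesis
      using block_vanishes_at_target_start[OF \<Theta>, of a c b d] \<Theta>_at[of c]
        block_vanishes_at_source_start[OF \<Psi>, of a c b d] \<Psi>_at[of c] assms
      by (cases "\<tau> (c - 1)") auto
  next
    case 2
    then show ?thesis
      using block_vanishes_at_target_start[OF \<Psi>, of c a d b] \<Psi>_at[of a]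
        block_vanishes_at_source_start[OF \<Theta>, of c a d b] \<Theta>_at[of a] assms
      by (cases "\<tau> (a - 1)") auto
  next
    case 3
    then show ?thesis
      using block_vanishes_at_source_end[OF \<Psi>, of c d a b] \<Psi>_at[of d]
        block_vanishes_at_target_end[OF \<Theta>, of c a d b] \<Theta>_at[of d] assms
      by (cases "\<tau> d") auto
  next
    case 4
    then show ?thesis
      using block_vanishes_at_source_end[OF \<Theta>, of a b c d] \<Theta>_at[of b]
        block_vanishes_at_target_end[OF \<Psi>, of a c b d] \<Psi>_at[of b] assms
      by (cases "\<tau> b") auto
  qed
qed

lemma proj_morphism_eq_sum_blocks:
  assumes M: "is_morphism n \<tau> m m' \<Phi>" and j: "1 \<le> j" "j \<le> n" and w: "w \<in> space n m j"
  shows "proj r s (\<Phi> j w)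
       = (\<lambda>z. \<Sum>cd\<in>{1..n} \<times> {1..n}. proj r s (\<Phi> j (proj (fst cd) (snd cd) w)) z)"
proof -
  have "\<Phi> j w = \<Phi> j (\<lambda>z. \<Sum>cd\<in>{1..n} \<times> {1..n}. proj (fst cd) (snd cd) w z)"
    using space_eq_sum_proj[OF w] by simp
  also have "\<dots> = (\<lambda>z. \<Sum>cd\<in>{1..n} \<times> {1..n}. \<Phi> j (proj (fst cd) (snd cd) w) z)"
    by (rule morphism_sum[OF M j]) (simp_all add: subsetD[OF space_single_subset proj_in_space_single[OF w]])
  finally show ?thesis by (simp add: proj_sum)
qed

lemma cross_block_product_vanishes:
  assumes \<Theta>: "is_morphism n \<tau> m1 m2 \<Theta>" and \<Psi>: "is_morphism n \<tau> m2 m3 \<Psi>"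
    and i: "1 \<le> i" "i \<le> n" and v: "v \<in> space n (single m1 a b) i"
    and "1 \<le> a" "b \<le> n" "1 \<le> c" "d \<le> n" "(c, d) \<noteq> (a, b)"
  shows "proj a b (\<Psi> i (proj c d (\<Theta> i v))) = (\<lambda>_. 0)"
proof -
  have w: "\<Theta> i v \<in> space n m2 i"
    using morphism_maps_space[OF \<Theta> i subsetD[OF space_single_subset v]] .
  have "proj c d (\<Theta> i v) = (\<lambda>_. 0) \<or> block_vanishes \<Psi> n m2 c d a b i"
  proof (cases "a \<le> i \<and> i \<le> b \<and> c \<le> i \<and> i \<le> d")
    case True
    then show ?thesis
      using block_vanishes_dichotomy[OF \<Theta> \<Psi>, of a i b c d] v assms(6-10)
      unfolding block_vanishes_def by auto
  next
    case False
    then show ?thesis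
      using proj_outside[OF w] space_single_outside[OF v] morphism_zero[OF \<Theta> i] proj_zero by metis
  qed
  then show ?thesis
    using proj_in_space_single[OF w] morphism_zero[OF \<Psi> i] proj_zero
    unfolding block_vanishes_def by auto
qed

theorem mainTheorem6:
  fixes n :: nat and \<tau> :: "nat \<Rightarrow> bool"
    and m1 m2 m3 :: "nat \<Rightarrow> nat \<Rightarrow> nat"
    and \<Theta> \<Psi> :: "nat \<Rightarrow> (idx \<Rightarrow> 'k::field) \<Rightarrow> (idx \<Rightarrow> 'k)"
  assumes "n \<ge> 1"
    and "is_morphism n \<tau> m1 m2 \<Theta>"
    and "is_morphism n \<tau> m2 m3 \<Psi>"
    and "1 \<le> a" and "a \<le> b" and "b \<le> n"
  shows "\<forall>i\<in>{1..n}. \<forall>v\<in>space n (single m1 a b) i.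
           block (comp_mor \<Psi> \<Theta>) a b a b i v = block \<Psi> a b a b i (block \<Theta> a b a b i v)"
proof (intro ballI)
  fix i and v :: "idx \<Rightarrow> 'k"
  assume "i \<in> {1..n}" and v: "v \<in> space n (single m1 a b) i"
  then have i: "1 \<le> i" "i \<le> n" by auto
  let ?w = "\<Theta> i v" and ?Q = "{1..n} \<times> {1..n}"
  let ?term = "\<lambda>cd. proj a b (\<Psi> i (proj (fst cd) (snd cd) ?w))"
  have ab: "(a, b) \<in> ?Q" using assms by auto
  have "proj a b (\<Psi> i ?w) = (\<lambda>z. \<Sum>cd\<in>?Q. ?term cd z)"
    using proj_morphism_eq_sum_blocks[OF assms(3) i morphism_maps_space[OF assms(2) i]]
      subsetD[OF space_single_subset v] by simp
  also have "\<dots> = ?term (a, b)"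
  proof (rule ext)
    fix z
    have "?term cd = (\<lambda>_. 0)" if "cd \<in> ?Q - {(a, b)}" for cd
      using that cross_block_product_vanishes[OF assms(2,3) i v, of "fst cd" "snd cd"] assms
      by (cases cd) auto
    then show "(\<Sum>cd\<in>?Q. ?term cd z) = ?term (a, b) z"
      using sum.remove[OF _ ab, of "\<lambda>cd. ?term cd z"] by (simp add: sum.neutral)
  qed
  finally show "block (comp_mor \<Psi> \<Theta>) a b a b i v = block \<Psi> a b a b i (block \<Theta> a b a b i v)"
    by (simp add: block_def comp_mor_def proj_single[OF v] proj_proj)
qed

end
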